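(* Fix integers $N\ge 2$ and $K\ge 1$. The class $M^{\text{DISTMULT}}$ is not universal, i.e. $\pi(\mathcal{M}^{\text{DISTMULT}})\ne\pi(\mathbb{R}^{N\times N\times K})$.
   Context: There are $N$ entities and $K$ relations. A score-based model assigns a score $s_k(i,j)\in\mathbb{R}$ to each triple, $i,j\in\{1,\dots,N\}$, $k\in\{1,\dots,K\}$; its scoring tensor $\mathcal{S}\in\mathbb{R}^{N\times N\times K}$ has frontal slices $\mathbf{S}_k$ with $[\mathbf{S}_k]_{ij}=s_k(i,j)$. For a real $N\times N$ matrix $\mathbf{S}$, $\pi(\mathbf{S})$ is the matrix of dense ranks: $\pi_{ij}(\mathbf{S})=1+$ (number of distinct values among entries of $\mathbf{S}$ strictly larger than $s_{ij}$). For tensors, $\pi$ acts slicewise; for a set $X$, $\pi(X)=\{\pi(x):x\in X\}$. DISTMULT of size $r$: parameters $\mathbf{A}\in\mathbb{R}^{N\times r}$ (rows $\mathbf{a}_i$), $\mathbf{R}\in\mathbb{R}^{K\times r}$ (rows $\mathbf{r}_k$), score $\mathbf{a}_i^T\mathrm{diag}(\mathbf{r}_k)\mathbf{a}_j$; $\mathcal{M}^{\text{DISTMULT}}$ is the set of scoring tensors of all DISTMULT models of all sizes $r\in\mathbb{N}^+$. *)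

theory Defs
  imports Complex_Main
begin

text \<open>An N x N x K real tensor is represented as a function of indices
  (i,j,k) with i,j in {1..N}, k in {1..K}; entries outside this range are 0.\<close>

definition in_range :: "nat \<Rightarrow> nat \<Rightarrow> nat \<Rightarrow> nat \<Rightarrow> nat \<Rightarrow> bool" where
  "in_range N K i j k \<longleftrightarrow> i \<in> {1..N} \<and> j \<in> {1..N} \<and> k \<in> {1..K}"

definition real_tensors :: "nat \<Rightarrow> nat \<Rightarrow> (nat \<Rightarrow> nat \<Rightarrow> nat \<Rightarrow> real) set" where
  "real_tensors N K = {S. \<forall>i j k. \<not> in_range N K i j k \<longrightarrow> S i j k = 0}"

definition slice_entries :: "nat \<Rightarrow> (nat \<Rightarrow> nat \<Rightarrow> nat \<Rightarrow> real) \<Rightarrow> nat \<Rightarrow> real set" where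
  "slice_entries N S k = {S i j k | i j. i \<in> {1..N} \<and> j \<in> {1..N}}"

definition dense_rank :: "nat \<Rightarrow> nat \<Rightarrow> (nat \<Rightarrow> nat \<Rightarrow> nat \<Rightarrow> real) \<Rightarrow> (nat \<Rightarrow> nat \<Rightarrow> nat \<Rightarrow> nat)" where
  "dense_rank N K S = (\<lambda>i j k. if in_range N K i j k
       then 1 + card {v \<in> slice_entries N S k. v > S i j k} else 0)"

text \<open>Scoring tensor of a DISTMULT model of size r with entity embeddings A (rows a_i,
  A i l = [a_i]_l, l in {1..r}) and relation embeddings R (R k l = [r_k]_l).\<close>
definition distmult_tensor :: "nat \<Rightarrow> nat \<Rightarrow> nat \<Rightarrow> (nat \<Rightarrow> nat \<Rightarrow> real) \<Rightarrow> (nat \<Rightarrow> nat \<Rightarrow> real)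
    \<Rightarrow> (nat \<Rightarrow> nat \<Rightarrow> nat \<Rightarrow> real)" where
  "distmult_tensor N K r A R = (\<lambda>i j k. if in_range N K i j k
       then (\<Sum>l\<in>{1..r}. A i l * R k l * A j l) else 0)"

definition distmult_class :: "nat \<Rightarrow> nat \<Rightarrow> (nat \<Rightarrow> nat \<Rightarrow> nat \<Rightarrow> real) set" where
  "distmult_class N K = {distmult_tensor N K r A R | r A R. r \<ge> 1}"

end

theory Submission
  imports Defs
begin

text \<open>A DISTMULT score a_i^T diag(r_k) a_j is symmetric in i and j, and so are its dense
  ranks; but the dense ranks of a tensor with a single nonzero entry at (1,2,1) are not.\<close>

lemma in_range_swap: "in_range N K j i k \<longleftrightarrow> in_range N K i j k"
  unfolding in_range_def by blast

lemma distmult_tensor_swap: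
  "distmult_tensor N K r A R j i k = distmult_tensor N K r A R i j k"
  unfolding distmult_tensor_def by (simp add: in_range_swap mult.commute mult.left_commute)

lemma dense_rank_swap:
  assumes "S j i k = S i j k"
  shows "dense_rank N K S j i k = dense_rank N K S i j k"
  unfolding dense_rank_def by (simp add: in_range_swap assms)

lemma dense_rank_swap_distmult:
  assumes "D \<in> distmult_class N K"
  shows "dense_rank N K D j i k = dense_rank N K D i j k"
  using assms distmult_tensor_swap unfolding distmult_class_def
  by (auto intro: dense_rank_swap)

lemma finite_slice_entries: "finite (slice_entries N S k)"
  unfolding slice_entries_def by (rule finite_image_set2) simp_all

lemma dense_rank_strict_antimono:
  assumes "in_range N K i j k" and "in_range N K i' j' k" and "S i' j' k < S i j k"
  shows "dense_rank N K S i j k < dense_rank N K S i' j' k"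
proof -
  let ?above = "\<lambda>x. {v \<in> slice_entries N S k. v > x}"
  have "S i j k \<in> slice_entries N S k"
    using assms(1) unfolding slice_entries_def in_range_def by blast
  then have "?above (S i j k) \<subset> ?above (S i' j' k)"
    using assms(3) by auto
  then have "card (?above (S i j k)) < card (?above (S i' j' k))"
    by (rule psubset_card_mono[OF finite_subset[OF _ finite_slice_entries], rotated]) auto
  then show ?thesis
    using assms(1,2) unfolding dense_rank_def by simp
qed

theorem theorem8:
  fixes N K :: nat
  assumes "N \<ge> 2" and "K \<ge> 1"
  shows "dense_rank N K ` distmult_class N K \<noteq> dense_rank N K ` real_tensors N K"
proof
  assume eq: "dense_rank N K ` distmult_class N K = dense_rank N K ` real_tensors N K"
  define T :: "nat \<Rightarrow> nat \<Rightarrow> nat \<Rightarrow> real" where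
    "T = (\<lambda>i j k. if i = 1 \<and> j = 2 \<and> k = 1 then 1 else 0)"
  have in_range_121: "in_range N K 1 2 1"
    using assms unfolding in_range_def by auto
  have "T \<in> real_tensors N K"
    unfolding real_tensors_def T_def using in_range_121 by auto
  with eq obtain D where "D \<in> distmult_class N K" and "dense_rank N K T = dense_rank N K D"
    by (metis imageE imageI)
  then have "dense_rank N K T 2 1 1 = dense_rank N K T 1 2 1"
    using dense_rank_swap_distmult by metis
  moreover have "dense_rank N K T 1 2 1 < dense_rank N K T 2 1 1"
    using in_range_121 by (intro dense_rank_strict_antimono) (auto simp: T_def in_range_swap)
  ultimately show False by simp
qed

end
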